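(* Let $p\geq 0$ be an integer, let $T$ be a tree with at least $p$ vertices and $H$ a connected graph with at least $2p$ vertices. Let $V\subseteq V(T(H))$ with $OC(T,V)=V(T)$, and let $V_1,V_2$ be a partition of $V$ with $|V_i|\leq |V(T(H))|-p^2$ for each $i\in\{1,2\}$. Then $T(H)$ has a matching of size $p$ in which the two ends of each edge have different roles with respect to $V_1,V_2$.
   Context: Graph $T(H)$: for a tree $T$ and a graph $H$ with $V(H)=\{1,\dots,m\}$, $T(H)$ has vertices $v^i$ ($v\in V(T)$, $1\le i\le m$); for each $v$ the vertices $v^1,\dots,v^m$ span a copy $H^v$ of $H$, and $u^iv^i$ is an edge for each $i$ whenever $uv\in E(T)$. $OC(T,V)=\{u\in V(T): V(H^u)\cap V\neq\emptyset\}$. Roles with respect to $V_1,V_2$: each vertex of $T(H)$ either belongs to $V_1$, belongs to $V_2$, or belongs to $V(T(H))\setminus V$; these are its three possible roles. *)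

theory Defs
  imports Main
begin

definition simple_graph :: "'v set \<Rightarrow> 'v set set \<Rightarrow> bool" where
  "simple_graph V E \<longleftrightarrow> finite V \<and> (\<forall>e\<in>E. e \<subseteq> V \<and> card e = 2)"

definition adj :: "'v set set \<Rightarrow> 'v \<Rightarrow> 'v \<Rightarrow> bool" where
  "adj E x y \<longleftrightarrow> {x, y} \<in> E"

definition connected_graph :: "'v set \<Rightarrow> 'v set set \<Rightarrow> bool" where
  "connected_graph V E \<longleftrightarrow> simple_graph V E \<and> V \<noteq> {} \<and>
     (\<forall>x\<in>V. \<forall>y\<in>V. (adj E)\<^sup>*\<^sup>* x y)"

definition is_cycle :: "'v set set \<Rightarrow> 'v list \<Rightarrow> bool" where
  "is_cycle E cs \<longleftrightarrow> length cs \<ge> 3 \<and> distinct cs \<and>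
     (\<forall>i. Suc i < length cs \<longrightarrow> adj E (cs ! i) (cs ! Suc i)) \<and>
     adj E (last cs) (hd cs)"

definition acyclic_graph :: "'v set set \<Rightarrow> bool" where
  "acyclic_graph E \<longleftrightarrow> (\<nexists>cs. is_cycle E cs)"

definition is_tree :: "'v set \<Rightarrow> 'v set set \<Rightarrow> bool" where
  "is_tree V E \<longleftrightarrow> connected_graph V E \<and> acyclic_graph E"

text \<open>The graph T(H), for T = (VT, ET) and H with vertex set {1..m} and edge set EH.
  Vertex v^i is represented as the pair (v, i).\<close>

definition TH_verts :: "'a set \<Rightarrow> nat \<Rightarrow> ('a \<times> nat) set" where
  "TH_verts VT m = VT \<times> {1..m}"

definition TH_edges :: "'a set \<Rightarrow> 'a set set \<Rightarrow> nat \<Rightarrow> nat set set \<Rightarrow> ('a \<times> nat) set set" where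
  "TH_edges VT ET m EH =
     {{(v, i), (v, j)} | v i j. v \<in> VT \<and> {i, j} \<in> EH} \<union>
     {{(u, i), (v, i)} | u v i. {u, v} \<in> ET \<and> i \<in> {1..m}}"

definition OC :: "'a set \<Rightarrow> nat \<Rightarrow> ('a \<times> nat) set \<Rightarrow> 'a set" where
  "OC VT m V = {u \<in> VT. \<exists>i\<in>{1..m}. (u, i) \<in> V}"

definition role :: "'b set \<Rightarrow> 'b set \<Rightarrow> 'b \<Rightarrow> nat" where
  "role V1 V2 x = (if x \<in> V1 then 1 else if x \<in> V2 then 2 else 0)"

definition matching :: "'b set set \<Rightarrow> 'b set set \<Rightarrow> bool" where
  "matching E M \<longleftrightarrow> M \<subseteq> E \<and> (\<forall>e\<in>M. \<forall>f\<in>M. e \<noteq> f \<longrightarrow> e \<inter> f = {})"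

end

theory Submission
  imports Defs
begin

text \<open>Colour each vertex of T(H) by its role. A copy H^u on which the roles are not constant
  contains, being connected, an edge with ends of different roles; the same holds for a layer
  T^i. Such edges taken from distinct copies (or from distinct layers) are disjoint, so p mixed
  copies or p mixed layers give the matching. Otherwise fewer than p copies and fewer than p
  layers are mixed; every vertex outside the product of these then has the role of a fixed
  unmixed copy H^u0, which is 1 or 2 because H^u0 meets V. So V1 or V2 has at least
  |V(T(H))| - (p-1)^2 > |V(T(H))| - p^2 elements.\<close>

definition rainbow :: "('b \<Rightarrow> 'c) \<Rightarrow> 'b set \<Rightarrow> bool" where
  "rainbow f e \<longleftrightarrow> (\<forall>x\<in>e. \<forall>y\<in>e. x \<noteq> y \<longrightarrow> f x \<noteq> f y)"

lemma rainbow_doubleton: "f a \<noteq> f b \<Longrightarrow> rainbow f {a, b}"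
  by (auto simp: rainbow_def)

lemma connected_graph_obtain_bichromatic_edge:
  assumes "connected_graph V E" "x \<in> V" "y \<in> V" "f x \<noteq> f y"
  obtains a b where "{a, b} \<in> E" "f a \<noteq> f b"
proof -
  have "(adj E)\<^sup>*\<^sup>* x y"
    using assms(1-3) by (simp add: connected_graph_def)
  then have "\<exists>a b. {a, b} \<in> E \<and> f a \<noteq> f b"
    using assms(4)
  proof (induction rule: rtranclp_induct)
    case (step z y)
    then show ?case
      by (cases "f x = f z") (auto simp: adj_def)
  qed simp
  then show ?thesis
    using that by blast
qed

lemma matching_of_edges_in_distinct_fibres:
  assumes "finite I" "p \<le> card I"
    and "\<forall>k\<in>I. \<exists>e\<in>E. e \<noteq> {} \<and> e \<subseteq> \<pi> -` {k} \<and> P e"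
  shows "\<exists>M. matching E M \<and> card M = p \<and> (\<forall>e\<in>M. P e)"
proof -
  obtain g where g: "\<forall>k\<in>I. g k \<in> E \<and> g k \<noteq> {} \<and> g k \<subseteq> \<pi> -` {k} \<and> P (g k)"
    using assms(3) by metis
  then have disjoint: "g k \<inter> g l = {}" if "k \<in> I" "l \<in> I" "k \<noteq> l" for k l
    using that by blast
  obtain J where J: "J \<subseteq> I" "card J = p"
    using obtain_subset_with_card_n[OF assms(2)] by blast
  have "inj_on g J"
    using g J(1) disjoint by (intro inj_onI) (metis Int_absorb subset_eq)
  then have "card (g ` J) = p"
    using J(2) by (simp add: card_image)
  moreover have "matching E (g ` J)"
    using g J(1) disjoint unfolding matching_def by blast
  ultimately show ?thesis
    using g J(1) by blast
qed

definition mixed_rows :: "('x \<times> 'y \<Rightarrow> 'c) \<Rightarrow> 'x set \<Rightarrow> 'y set \<Rightarrow> 'x set" where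
  "mixed_rows f X Y = {x \<in> X. \<exists>y\<in>Y. \<exists>y'\<in>Y. f (x, y) \<noteq> f (x, y')}"

definition mixed_cols :: "('x \<times> 'y \<Rightarrow> 'c) \<Rightarrow> 'x set \<Rightarrow> 'y set \<Rightarrow> 'y set" where
  "mixed_cols f X Y = {y \<in> Y. \<exists>x\<in>X. \<exists>x'\<in>X. f (x, y) \<noteq> f (x', y)}"

lemma unmixed_row_eq:
  "x \<in> X \<Longrightarrow> x \<notin> mixed_rows f X Y \<Longrightarrow> y \<in> Y \<Longrightarrow> y' \<in> Y \<Longrightarrow> f (x, y) = f (x, y')"
  unfolding mixed_rows_def by blast

lemma unmixed_col_eq:
  "y \<in> Y \<Longrightarrow> y \<notin> mixed_cols f X Y \<Longrightarrow> x \<in> X \<Longrightarrow> x' \<in> X \<Longrightarrow> f (x, y) = f (x', y)"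
  unfolding mixed_cols_def by blast

lemma eq_outside_mixed_rows_times_cols:
  assumes "x0 \<in> X - mixed_rows f X Y" "y0 \<in> Y - mixed_cols f X Y"
    and "z \<in> X \<times> Y - mixed_rows f X Y \<times> mixed_cols f X Y"
  shows "f z = f (x0, y0)"
proof -
  obtain x y where z: "z = (x, y)" "x \<in> X" "y \<in> Y"
    and unmixed: "x \<notin> mixed_rows f X Y \<or> y \<notin> mixed_cols f X Y"
    using assms(3) by blast
  from unmixed have "f (x, y) = f (x0, y0)"
  proof
    assume "x \<notin> mixed_rows f X Y"
    then have "f (x, y) = f (x, y0)"
      using z assms(2) by (intro unmixed_row_eq) auto
    also have "\<dots> = f (x0, y0)"
      using z assms by (intro unmixed_col_eq) auto
    finally show ?thesis .
  next
    assume "y \<notin> mixed_cols f X Y"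
    then have "f (x, y) = f (x0, y)"
      using z assms(1) by (intro unmixed_col_eq) auto
    also have "\<dots> = f (x0, y0)"
      using z assms by (intro unmixed_row_eq) auto
    finally show ?thesis .
  qed
  then show ?thesis
    using z(1) by simp
qed

lemma large_level_set_if_few_mixed:
  assumes "finite X" "finite Y" "p \<le> card X" "p \<le> card Y"
    and "card (mixed_rows f X Y) < p" "card (mixed_cols f X Y) < p"
  obtains x0 c where "x0 \<in> X" "\<forall>y\<in>Y. f (x0, y) = c"
    and "card X * card Y - p\<^sup>2 < card {z \<in> X \<times> Y. f z = c}"
proof -
  let ?A = "mixed_rows f X Y" and ?B = "mixed_cols f X Y"
  have sub: "?A \<subseteq> X" "?B \<subseteq> Y"
    by (auto simp: mixed_rows_def mixed_cols_def)
  obtain x0 where x0: "x0 \<in> X - ?A"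
    using assms(3,5) sub(1) by (metis Diff_eq_empty_iff all_not_in_conv leD subset_antisym)
  obtain y0 where y0: "y0 \<in> Y - ?B"
    using assms(4,6) sub(2) by (metis Diff_eq_empty_iff all_not_in_conv leD subset_antisym)
  let ?c = "f (x0, y0)"
  have "card (X \<times> Y - ?A \<times> ?B) = card X * card Y - card ?A * card ?B"
    using sub assms(1,2)
    by (simp add: card_Diff_subset card_cartesian_product finite_subset Sigma_mono)
  moreover have "card ?A * card ?B < p\<^sup>2"
    using assms(5,6) by (simp add: power2_eq_square mult_strict_mono)
  moreover have "p\<^sup>2 \<le> card X * card Y"
    using assms(3,4) by (simp add: power2_eq_square mult_le_mono)
  moreover have "X \<times> Y - ?A \<times> ?B \<subseteq> {z \<in> X \<times> Y. f z = ?c}"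
    using eq_outside_mixed_rows_times_cols[OF x0 y0] by blast
  then have "card (X \<times> Y - ?A \<times> ?B) \<le> card {z \<in> X \<times> Y. f z = ?c}"
    using assms(1,2) by (intro card_mono) auto
  ultimately have "card X * card Y - p\<^sup>2 < card {z \<in> X \<times> Y. f z = ?c}"
    by linarith
  moreover have "\<forall>y\<in>Y. f (x0, y) = ?c"
    using x0 y0 by (auto intro: unmixed_row_eq)
  ultimately show ?thesis
    using that x0 by blast
qed

lemma TH_matching_of_mixed_rows:
  assumes "connected_graph {1..m} EH" "finite VT"
    and "p \<le> card (mixed_rows f VT {1..m})"
  shows "\<exists>M. matching (TH_edges VT ET m EH) M \<and> card M = p \<and> (\<forall>e\<in>M. rainbow f e)"
proof (rule matching_of_edges_in_distinct_fibres[where \<pi> = fst])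
  show "finite (mixed_rows f VT {1..m})"
    using assms(2) by (simp add: mixed_rows_def)
  show "\<forall>u\<in>mixed_rows f VT {1..m}. \<exists>e\<in>TH_edges VT ET m EH.
          e \<noteq> {} \<and> e \<subseteq> fst -` {u} \<and> rainbow f e"
  proof
    fix u assume "u \<in> mixed_rows f VT {1..m}"
    then obtain i j where "u \<in> VT" "i \<in> {1..m}" "j \<in> {1..m}" "f (u, i) \<noteq> f (u, j)"
      by (auto simp: mixed_rows_def)
    moreover obtain a b where "{a, b} \<in> EH" "f (u, a) \<noteq> f (u, b)"
      using connected_graph_obtain_bichromatic_edge[OF assms(1) calculation(2,3,4)] .
    ultimately show "\<exists>e\<in>TH_edges VT ET m EH. e \<noteq> {} \<and> e \<subseteq> fst -` {u} \<and> rainbow f e"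
      by (intro bexI[of _ "{(u, a), (u, b)}"]) (auto simp: TH_edges_def rainbow_doubleton)
  qed
qed (use assms(3) in simp)

lemma TH_matching_of_mixed_cols:
  assumes "connected_graph VT ET"
    and "p \<le> card (mixed_cols f VT {1..m})"
  shows "\<exists>M. matching (TH_edges VT ET m EH) M \<and> card M = p \<and> (\<forall>e\<in>M. rainbow f e)"
proof (rule matching_of_edges_in_distinct_fibres[where \<pi> = snd])
  show "finite (mixed_cols f VT {1..m})"
    by (simp add: mixed_cols_def)
  show "\<forall>i\<in>mixed_cols f VT {1..m}. \<exists>e\<in>TH_edges VT ET m EH.
          e \<noteq> {} \<and> e \<subseteq> snd -` {i} \<and> rainbow f e"
  proof
    fix i assume "i \<in> mixed_cols f VT {1..m}"
    then obtain u v where "i \<in> {1..m}" "u \<in> VT" "v \<in> VT" "f (u, i) \<noteq> f (v, i)"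
      by (auto simp: mixed_cols_def)
    moreover obtain a b where "{a, b} \<in> ET" "f (a, i) \<noteq> f (b, i)"
      using connected_graph_obtain_bichromatic_edge[OF assms(1) calculation(2,3,4)] .
    ultimately show "\<exists>e\<in>TH_edges VT ET m EH. e \<noteq> {} \<and> e \<subseteq> snd -` {i} \<and> rainbow f e"
      by (intro bexI[of _ "{(a, i), (b, i)}"]) (auto simp: TH_edges_def rainbow_doubleton)
  qed
qed (use assms(2) in simp)

lemma role_class_large_if_few_mixed:
  assumes "finite VT" "p \<le> card VT" "2 * p \<le> m"
    and "V \<subseteq> TH_verts VT m" "OC VT m V = VT" "V1 \<union> V2 = V"
    and "card (mixed_rows (role V1 V2) VT {1..m}) < p"
    and "card (mixed_cols (role V1 V2) VT {1..m}) < p"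
  shows "card (TH_verts VT m) - p\<^sup>2 < card V1 \<or> card (TH_verts VT m) - p\<^sup>2 < card V2"
proof -
  let ?f = "role V1 V2"
  have "p \<le> card {1..m}"
    using assms(3) by simp
  from large_level_set_if_few_mixed[OF assms(1) _ assms(2) this assms(7,8)]
  obtain u0 c where u0: "u0 \<in> VT" "\<forall>i\<in>{1..m}. ?f (u0, i) = c"
    and big: "card VT * m - p\<^sup>2 < card {z \<in> VT \<times> {1..m}. ?f z = c}"
    by auto
  have "u0 \<in> OC VT m V"
    using assms(5) u0(1) by simp
  then obtain i where "i \<in> {1..m}" "(u0, i) \<in> V"
    by (auto simp: OC_def)
  then have "c = ?f (u0, i)" "(u0, i) \<in> V1 \<union> V2"
    using u0(2) assms(6) by auto
  then have c: "c = 1 \<or> c = 2"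
    by (auto simp: role_def)
  define W where "W = (if c = 1 then V1 else V2)"
  have "{z \<in> VT \<times> {1..m}. ?f z = c} \<subseteq> W"
    using c unfolding W_def role_def by auto
  moreover have "finite W"
    using assms(1,4,6) unfolding W_def TH_verts_def by (auto intro: finite_subset)
  ultimately have "card {z \<in> VT \<times> {1..m}. ?f z = c} \<le> card W"
    by (rule card_mono[rotated])
  then show ?thesis
    using big unfolding W_def TH_verts_def by (auto simp: card_cartesian_product split: if_splits)
qed

theorem lemma2:
  fixes p m :: nat and VT :: "'a set" and ET :: "'a set set" and EH :: "nat set set"
    and V V1 V2 :: "('a \<times> nat) set"
  assumes tree: "is_tree VT ET" and Tsize: "card VT \<ge> p"
    and Hconn: "connected_graph {1..m} EH" and Hsize: "m \<ge> 2 * p"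
    and Vsub: "V \<subseteq> TH_verts VT m"
    and OCall: "OC VT m V = VT"
    and part: "V1 \<union> V2 = V" "V1 \<inter> V2 = {}"
    and size1: "card V1 \<le> card (TH_verts VT m) - p^2"
    and size2: "card V2 \<le> card (TH_verts VT m) - p^2"
  shows "\<exists>M. matching (TH_edges VT ET m EH) M \<and> card M = p \<and>
           (\<forall>e\<in>M. \<forall>x\<in>e. \<forall>y\<in>e. x \<noteq> y \<longrightarrow> role V1 V2 x \<noteq> role V1 V2 y)"
proof -
  let ?f = "role V1 V2"
  have Tconn: "connected_graph VT ET" and finVT: "finite VT"
    using tree by (auto simp: is_tree_def connected_graph_def simple_graph_def)
  consider "p \<le> card (mixed_rows ?f VT {1..m})" | "p \<le> card (mixed_cols ?f VT {1..m})"
    | "card (mixed_rows ?f VT {1..m}) < p" "card (mixed_cols ?f VT {1..m}) < p"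
    by linarith
  then have "\<exists>M. matching (TH_edges VT ET m EH) M \<and> card M = p \<and> (\<forall>e\<in>M. rainbow ?f e)"
  proof cases
    case 3
    with role_class_large_if_few_mixed[OF finVT Tsize Hsize Vsub OCall part(1)]
    show ?thesis
      using size1 size2 by linarith
  qed (fact TH_matching_of_mixed_rows[OF Hconn finVT] TH_matching_of_mixed_cols[OF Tconn])+
  then show ?thesis
    by (simp add: rainbow_def)
qed

end
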